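(* Let $A_1,A_2\subseteq A$ be disjoint, and let $M$ and $N$ be tree-like models with roots $s$ and $t$ respectively. If $M,s\succeq_{(A_1,A_2)}N,t$, then there exist a tree-like model $N'$ with root $t'$ and a relation $\mathcal Z\subseteq S^M\times S^{N'}$ such that (1) $N,t\,\underline{\leftrightarrow}\,N',t'$; (2) $\mathcal Z$ is an $(A_1,A_2)$-refinement between $M$ and $N'$ with $s\mathcal Zt'$; and (3) $\mathcal Z$ is injective: for all $v\in S^{N'}$ and $w_1,w_2\in S^M$, if $w_1\mathcal Zv$ and $w_2\mathcal Zv$ then $w_1=w_2$.
   Context: Fix a finite set $A$ of actions and a countably infinite set $Atom$ of propositional letters. A model is $M=\langle S^M,R^M,V^M\rangle$ with $S^M\neq\emptyset$ a set of states, $R^M_b\subseteq S^M\times S^M$ for each $b\in A$, and $V^M:Atom\to 2^{S^M}$. $R^+_M$ denotes the transitive closure of $\bigcup_{b\in A}R^M_b$. Refinements: given $P\subseteq Atom$ and disjoint $A_1,A_2\subseteq A$, a relation $\mathcal Z\subseteq S^M\times S^{M'}$ is a $P$-restricted $(A_1,A_2)$-refinement between $M$ and $M'$ if for every pair $u\mathcal Z u'$: (atoms) $u\in V^M(r)$ iff $u'\in V^{M'}(r)$ for all $r\in Atom\setminus P$; (forth) for every $a\in A\setminus A_2$ and every $v$ with $uR^M_a v$ there is $v'$ with $u'R^{M'}_a v'$ and $v\mathcal Z v'$; (back) for every $a\in A\setminus A_1$ and every $v'$ with $u'R^{M'}_a v'$ there is $v$ with $uR^M_a v$ and $v\mathcal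 Z v'$. Write $M,u\succeq^P_{(A_1,A_2)}M',u'$ if such a $\mathcal Z$ exists with $u\mathcal Z u'$; the superscript is omitted when $P=\emptyset$. A bisimulation is an $\emptyset$-restricted $(\emptyset,\emptyset)$-refinement; $M,s\,\underline{\leftrightarrow}\,N,t$ means one exists linking $s$ and $t$. A model $M$ is tree-like if: (i) there is a unique state $s$ (the root) such that $sR^+_Mt$ for all $t\in S^M\setminus\{s\}$; (ii) for each $t\in S^M\setminus\{s\}$ there is a unique $t'\in S^M$ with $t'R^M_at$ for some $a\in A$; (iii) $R^M_a\cap R^M_b=\emptyset$ for all distinct $a,b\in A$; (iv) $\langle t,t\rangle\notin R^+_M$ for all $t\in S^M$. *)

theory Defs
  imports Main
begin

text \<open>Actions: the finite type 'act (the action set A is UNIV).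
  Propositional letters: nat (a countably infinite set Atom).\<close>

record ('s, 'act) model =
  St  :: "'s set"
  Rel :: "'act \<Rightarrow> ('s \<times> 's) set"
  Val :: "nat \<Rightarrow> 's set"

definition is_model :: "('s, 'act::finite) model \<Rightarrow> bool" where
  "is_model M \<longleftrightarrow> St M \<noteq> {} \<and> (\<forall>b. Rel M b \<subseteq> St M \<times> St M) \<and> (\<forall>p. Val M p \<subseteq> St M)"

definition Rplus :: "('s, 'act::finite) model \<Rightarrow> ('s \<times> 's) set" where
  "Rplus M = (\<Union>b. Rel M b)\<^sup>+"

definition is_root :: "('s, 'act::finite) model \<Rightarrow> 's \<Rightarrow> bool" where
  "is_root M s \<longleftrightarrow> s \<in> St M \<and> (\<forall>t \<in> St M - {s}. (s, t) \<in> Rplus M)"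

definition tree_like :: "('s, 'act::finite) model \<Rightarrow> bool" where
  "tree_like M \<longleftrightarrow>
     (\<exists>!s. is_root M s)
   \<and> (\<forall>t \<in> St M - {THE s. is_root M s}. \<exists>!t'. t' \<in> St M \<and> (\<exists>a. (t', t) \<in> Rel M a))
   \<and> (\<forall>a b. a \<noteq> b \<longrightarrow> Rel M a \<inter> Rel M b = {})
   \<and> (\<forall>t \<in> St M. (t, t) \<notin> Rplus M)"

definition refinement ::
  "nat set \<Rightarrow> 'act set \<Rightarrow> 'act set \<Rightarrow> ('s, 'act::finite) model \<Rightarrow> ('t, 'act) model
    \<Rightarrow> ('s \<times> 't) set \<Rightarrow> bool" where
  "refinement P A1 A2 M M' Z \<longleftrightarrow> Z \<subseteq> St M \<times> St M' \<and>
     (\<forall>u u'. (u, u') \<in> Z \<longrightarrow>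
        (\<forall>r. r \<notin> P \<longrightarrow> (u \<in> Val M r \<longleftrightarrow> u' \<in> Val M' r))
      \<and> (\<forall>a v. a \<notin> A2 \<longrightarrow> (u, v) \<in> Rel M a \<longrightarrow> (\<exists>v'. (u', v') \<in> Rel M' a \<and> (v, v') \<in> Z))
      \<and> (\<forall>a v'. a \<notin> A1 \<longrightarrow> (u', v') \<in> Rel M' a \<longrightarrow> (\<exists>v. (u, v) \<in> Rel M a \<and> (v, v') \<in> Z)))"

definition refines ::
  "nat set \<Rightarrow> 'act set \<Rightarrow> 'act set \<Rightarrow> ('s, 'act::finite) model \<Rightarrow> 's \<Rightarrow> ('t, 'act) model \<Rightarrow> 't \<Rightarrow> bool" where
  "refines P A1 A2 M u M' u' \<longleftrightarrow> (\<exists>Z. refinement P A1 A2 M M' Z \<and> (u, u') \<in> Z)"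

definition bisimilar :: "('s, 'act::finite) model \<Rightarrow> 's \<Rightarrow> ('t, 'act) model \<Rightarrow> 't \<Rightarrow> bool" where
  "bisimilar M s N t \<longleftrightarrow> refines {} {} {} M s N t"

end

theory Submission
  imports Defs
begin

text \<open>The model N' is the unravelling of N in which every node carries, besides the N-state it
  copies, the M-state that is Z-related to it, or None once no such state is recorded. An
  annotation may only be dropped along an action of A1, where M is not obliged to simulate N.
  Unravelling makes N' tree-like, forgetting the annotations gives a bisimulation with N, and
  reading off the annotations gives a refinement from M that is functional on the side of N'.
  Nothing about M is used beyond the refinement, and about N only that distinct actions have
  disjoint relations.\<close>

inductive_set unravel_paths :: "('act \<Rightarrow> 'x \<Rightarrow> 'x \<Rightarrow> bool) \<Rightarrow> 'x \<Rightarrow> 'x list set"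
  for step x0 where
  root: "[x0] \<in> unravel_paths step x0"
| step: "p \<in> unravel_paths step x0 \<Longrightarrow> step a (hd p) x \<Longrightarrow> x # p \<in> unravel_paths step x0"

definition unravel ::
  "('act \<Rightarrow> 'x \<Rightarrow> 'x \<Rightarrow> bool) \<Rightarrow> (nat \<Rightarrow> 'x set) \<Rightarrow> 'x \<Rightarrow> ('x list, 'act) model" where
  "unravel step V x0 =
     \<lparr>St = unravel_paths step x0,
      Rel = (\<lambda>a. {(p, x # p) | p x. p \<in> unravel_paths step x0 \<and> step a (hd p) x}),
      Val = (\<lambda>r. {p \<in> unravel_paths step x0. hd p \<in> V r})\<rparr>"

lemma St_unravel [simp]: "St (unravel step V x0) = unravel_paths step x0"
  by (simp add: unravel_def)

lemma Rel_unravel_iff: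
  "(p, q) \<in> Rel (unravel step V x0) a \<longleftrightarrow>
     p \<in> unravel_paths step x0 \<and> (\<exists>x. q = x # p \<and> step a (hd p) x)"
  by (auto simp: unravel_def)

lemma Val_unravel [simp]: "Val (unravel step V x0) r = {p \<in> unravel_paths step x0. hd p \<in> V r}"
  by (simp add: unravel_def)

lemma unravel_paths_nonempty: "p \<in> unravel_paths step x0 \<Longrightarrow> p \<noteq> []"
  by (induction rule: unravel_paths.induct) auto

lemma is_model_unravel: "is_model (unravel step V x0)"
  unfolding is_model_def by (auto simp: Rel_unravel_iff intro: unravel_paths.intros)

lemma Rplus_unravel_length_less:
  "(p, q) \<in> Rplus (unravel step V x0) \<Longrightarrow> length p < length q"
  unfolding Rplus_def by (induction rule: trancl_induct) (auto simp: Rel_unravel_iff)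

lemma is_root_unravel: "is_root (unravel step V x0) [x0]"
  unfolding is_root_def
proof (intro conjI ballI)
  show "[x0] \<in> St (unravel step V x0)" by (simp add: unravel_paths.root)
next
  fix p assume "p \<in> St (unravel step V x0) - {[x0]}"
  then have "p \<in> unravel_paths step x0" "p \<noteq> [x0]" by auto
  then show "([x0], p) \<in> Rplus (unravel step V x0)"
  proof (induction rule: unravel_paths.induct)
    case root then show ?case by simp
  next
    case (step p a x)
    then have edge: "(p, x # p) \<in> (\<Union>b. Rel (unravel step V x0) b)"
      by (auto simp: Rel_unravel_iff)
    show ?case
    proof (cases "p = [x0]")
      case True with edge show ?thesis unfolding Rplus_def by auto
    next
      case False with step.IH edge show ?thesis
        unfolding Rplus_def by (blast intro: trancl_into_trancl)
    qed
  qed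
qed

lemma is_root_unravel_iff: "is_root (unravel step V x0) p \<longleftrightarrow> p = [x0]"
proof
  assume root: "is_root (unravel step V x0) p"
  show "p = [x0]"
  proof (rule ccontr)
    assume "p \<noteq> [x0]"
    with root have "(p, [x0]) \<in> Rplus (unravel step V x0)"
      unfolding is_root_def by (auto intro: unravel_paths.root)
    then have "length p < 1" by (auto dest: Rplus_unravel_length_less)
    moreover have "p \<noteq> []"
      using root unfolding is_root_def by (auto dest: unravel_paths_nonempty)
    ultimately show False by simp
  qed
qed (simp add: is_root_unravel)

lemma tree_like_unravel:
  assumes "\<And>a b x y. step a x y \<Longrightarrow> step b x y \<Longrightarrow> a = b"
  shows "tree_like (unravel step V x0)"
  unfolding tree_like_def
proof (intro conjI)
  show "\<exists>!p. is_root (unravel step V x0) p"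
    by (simp add: is_root_unravel_iff)
  then have the_root: "(THE p. is_root (unravel step V x0) p) = [x0]"
    by (simp add: is_root_unravel_iff)
  show "\<forall>q \<in> St (unravel step V x0) - {THE p. is_root (unravel step V x0) p}.
          \<exists>!p. p \<in> St (unravel step V x0) \<and> (\<exists>a. (p, q) \<in> Rel (unravel step V x0) a)"
  proof
    fix q assume "q \<in> St (unravel step V x0) - {THE p. is_root (unravel step V x0) p}"
    then have "q \<in> unravel_paths step x0" "q \<noteq> [x0]" using the_root by auto
    then obtain p a x where "q = x # p" "p \<in> unravel_paths step x0" "step a (hd p) x"
      by (cases rule: unravel_paths.cases) auto
    then show "\<exists>!p. p \<in> St (unravel step V x0) \<and> (\<exists>a. (p, q) \<in> Rel (unravel step V x0) a)"
      by (auto simp: Rel_unravel_iff)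
  qed
  show "\<forall>a b. a \<noteq> b \<longrightarrow> Rel (unravel step V x0) a \<inter> Rel (unravel step V x0) b = {}"
    using assms by (auto simp: Rel_unravel_iff)
  show "\<forall>p \<in> St (unravel step V x0). (p, p) \<notin> Rplus (unravel step V x0)"
    by (auto dest: Rplus_unravel_length_less)
qed

lemma refinement_unravel:
  fixes M :: "('s, 'act::finite) model"
  assumes "R \<subseteq> St M \<times> UNIV"
    and atoms: "\<And>m x r. (m, x) \<in> R \<Longrightarrow> r \<notin> P \<Longrightarrow> m \<in> Val M r \<longleftrightarrow> x \<in> V r"
    and forward: "\<And>m x a m'. (m, x) \<in> R \<Longrightarrow> a \<notin> A2 \<Longrightarrow> (m, m') \<in> Rel M a \<Longrightarrow>
                  \<exists>x'. step a x x' \<and> (m', x') \<in> R"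
    and backward: "\<And>m x a x'. (m, x) \<in> R \<Longrightarrow> a \<notin> A1 \<Longrightarrow> step a x x' \<Longrightarrow>
                  \<exists>m'. (m, m') \<in> Rel M a \<and> (m', x') \<in> R"
  shows "refinement P A1 A2 M (unravel step V x0)
           {(m, p). p \<in> unravel_paths step x0 \<and> (m, hd p) \<in> R}"
  unfolding refinement_def
proof (intro conjI allI impI)
  fix m p a m'
  assume "(m, p) \<in> {(m, p). p \<in> unravel_paths step x0 \<and> (m, hd p) \<in> R}" "a \<notin> A2"
    "(m, m') \<in> Rel M a"
  with forward obtain x' where "step a (hd p) x'" "(m', x') \<in> R" by blast
  with \<open>(m, p) \<in> _\<close> show "\<exists>p'. (p, p') \<in> Rel (unravel step V x0) a \<and>
      (m', p') \<in> {(m, p). p \<in> unravel_paths step x0 \<and> (m, hd p) \<in> R}"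
    by (auto simp: Rel_unravel_iff intro: unravel_paths.step)
next
  fix m p a p'
  assume "(m, p) \<in> {(m, p). p \<in> unravel_paths step x0 \<and> (m, hd p) \<in> R}" "a \<notin> A1"
    "(p, p') \<in> Rel (unravel step V x0) a"
  with backward show "\<exists>m'. (m, m') \<in> Rel M a \<and>
      (m', p') \<in> {(m, p). p \<in> unravel_paths step x0 \<and> (m, hd p) \<in> R}"
    by (fastforce simp: Rel_unravel_iff intro: unravel_paths.step)
qed (use assms(1) atoms in auto)

definition annotated_step ::
  "('s, 'act) model \<Rightarrow> ('t, 'act) model \<Rightarrow> ('s \<times> 't) set \<Rightarrow> 'act set
    \<Rightarrow> 'act \<Rightarrow> 's option \<times> 't \<Rightarrow> 's option \<times> 't \<Rightarrow> bool" where
  "annotated_step M N Z A1 a x y \<longleftrightarrow> (snd x, snd y) \<in> Rel N a \<and>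
     (case fst y of
        None \<Rightarrow> fst x = None \<or> a \<in> A1
      | Some m' \<Rightarrow> (\<exists>m. fst x = Some m \<and> (m, m') \<in> Rel M a \<and> (m', snd y) \<in> Z))"

definition annotated_unravel ::
  "('s, 'act) model \<Rightarrow> ('t, 'act) model \<Rightarrow> ('s \<times> 't) set \<Rightarrow> 'act set \<Rightarrow> 's \<Rightarrow> 't
    \<Rightarrow> (('s option \<times> 't) list, 'act) model" where
  "annotated_unravel M N Z A1 s t =
     unravel (annotated_step M N Z A1) (\<lambda>r. {x. snd x \<in> Val N r}) (Some s, t)"

lemma tree_like_annotated_unravel:
  assumes "tree_like N"
  shows "tree_like (annotated_unravel M N Z A1 s t)"
  unfolding annotated_unravel_def
proof (rule tree_like_unravel)
  fix a b x y assume "annotated_step M N Z A1 a x y" "annotated_step M N Z A1 b x y"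
  then have "(snd x, snd y) \<in> Rel N a \<inter> Rel N b" by (simp add: annotated_step_def)
  with assms show "a = b" unfolding tree_like_def by blast
qed

lemma bisimilar_annotated_unravel:
  assumes "is_model N" and Z: "refinement P A1 A2 M N Z" and "(s, t) \<in> Z"
  shows "bisimilar N t (annotated_unravel M N Z A1 s t) [(Some s, t)]"
proof -
  have Z_St: "Z \<subseteq> St M \<times> St N" using Z by (simp add: refinement_def)
  define R where
    "R = {(n, x). snd x = n \<and> n \<in> St N \<and> (\<forall>m. fst x = Some m \<longrightarrow> (m, n) \<in> Z)}"
  have "refinement {} {} {} N (annotated_unravel M N Z A1 s t)
          {(n, p). p \<in> unravel_paths (annotated_step M N Z A1) (Some s, t) \<and> (n, hd p) \<in> R}"
    unfolding annotated_unravel_def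
  proof (rule refinement_unravel)
    fix n x a n' assume "(n, x) \<in> R" "(n, n') \<in> Rel N a"
    moreover have "n' \<in> St N" using \<open>(n, n') \<in> Rel N a\<close> \<open>is_model N\<close>
      by (auto simp: is_model_def)
    moreover
    \<comment> \<open>The annotation is kept when M can follow the step, and dropped otherwise.\<close>
    have "\<exists>y. annotated_step M N Z A1 a x (y, n') \<and> (\<forall>m'. y = Some m' \<longrightarrow> (m', n') \<in> Z)"
    proof (cases "fst x = None \<or> a \<in> A1")
      case True
      with \<open>(n, x) \<in> R\<close> \<open>(n, n') \<in> Rel N a\<close> show ?thesis
        by (intro exI[of _ None]) (auto simp: annotated_step_def R_def)
    next
      case False
      then obtain m where "fst x = Some m" "a \<notin> A1" by auto
      with \<open>(n, x) \<in> R\<close> have "(m, n) \<in> Z" by (simp add: R_def)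
      with Z \<open>a \<notin> A1\<close> \<open>(n, n') \<in> Rel N a\<close> obtain m' where "(m, m') \<in> Rel M a" "(m', n') \<in> Z"
        unfolding refinement_def by blast
      with \<open>fst x = Some m\<close> \<open>(n, x) \<in> R\<close> \<open>(n, n') \<in> Rel N a\<close> show ?thesis
        by (intro exI[of _ "Some m'"]) (auto simp: annotated_step_def R_def)
    qed
    ultimately show "\<exists>x'. annotated_step M N Z A1 a x x' \<and> (n', x') \<in> R"
      by (auto simp: R_def)
  next
    fix n x a x' assume "(n, x) \<in> R" "annotated_step M N Z A1 a x x'"
    with \<open>is_model N\<close> show "\<exists>n'. (n, n') \<in> Rel N a \<and> (n', x') \<in> R"
      by (auto simp: R_def annotated_step_def is_model_def split: option.splits)
  qed (auto simp: R_def)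
  moreover have "(t, [(Some s, t)]) \<in>
      {(n, p). p \<in> unravel_paths (annotated_step M N Z A1) (Some s, t) \<and> (n, hd p) \<in> R}"
    using \<open>(s, t) \<in> Z\<close> Z_St by (auto simp: R_def intro: unravel_paths.root)
  ultimately show ?thesis unfolding bisimilar_def refines_def by blast
qed

lemma refinement_annotated_unravel:
  assumes Z: "refinement P A1 A2 M N Z"
  shows "refinement P A1 A2 M (annotated_unravel M N Z A1 s t)
           {(m, p). p \<in> unravel_paths (annotated_step M N Z A1) (Some s, t) \<and>
                    fst (hd p) = Some m \<and> (m, snd (hd p)) \<in> Z}"
proof -
  define R where "R = {(m, x). fst x = Some m \<and> (m, snd x) \<in> Z}"
  have "refinement P A1 A2 M (annotated_unravel M N Z A1 s t)
          {(m, p). p \<in> unravel_paths (annotated_step M N Z A1) (Some s, t) \<and> (m, hd p) \<in> R}"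
    unfolding annotated_unravel_def
    by (rule refinement_unravel)
      (use Z in \<open>fastforce simp: R_def refinement_def annotated_step_def split: option.splits\<close>)+
  then show ?thesis by (simp add: R_def)
qed

theorem mainTheorem13:
  fixes M :: "('s, 'act::finite) model" and N :: "('t, 'act) model"
    and A1 A2 :: "'act set" and s :: 's and t :: 't
  assumes "A1 \<inter> A2 = {}"
    and "is_model M" and "tree_like M" and "is_root M s"
    and "is_model N" and "tree_like N" and "is_root N t"
    and "refines {} A1 A2 M s N t"
  shows "\<exists>(N' :: (('s option \<times> 't) list, 'act) model) t' Z.
           is_model N' \<and> tree_like N' \<and> is_root N' t'
         \<and> bisimilar N t N' t'
         \<and> refinement {} A1 A2 M N' Z \<and> (s, t') \<in> Z
         \<and> (\<forall>v w1 w2. (w1, v) \<in> Z \<longrightarrow> (w2, v) \<in> Z \<longrightarrow> w1 = w2)"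
proof -
  obtain Z where Z: "refinement {} A1 A2 M N Z" and "(s, t) \<in> Z"
    using \<open>refines {} A1 A2 M s N t\<close> unfolding refines_def by blast
  let ?N' = "annotated_unravel M N Z A1 s t"
  let ?Z' = "{(m, p). p \<in> unravel_paths (annotated_step M N Z A1) (Some s, t) \<and>
                      fst (hd p) = Some m \<and> (m, snd (hd p)) \<in> Z}"
  have "is_model ?N'" "is_root ?N' [(Some s, t)]"
    unfolding annotated_unravel_def by (rule is_model_unravel, rule is_root_unravel)
  moreover have "tree_like ?N'"
    using \<open>tree_like N\<close> by (rule tree_like_annotated_unravel)
  moreover have "bisimilar N t ?N' [(Some s, t)]"
    using \<open>is_model N\<close> Z \<open>(s, t) \<in> Z\<close> by (rule bisimilar_annotated_unravel)
  moreover have "refinement {} A1 A2 M ?N' ?Z'"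
    using Z by (rule refinement_annotated_unravel)
  moreover have "(s, [(Some s, t)]) \<in> ?Z'"
    using \<open>(s, t) \<in> Z\<close> by (auto intro: unravel_paths.root)
  moreover have "\<forall>p m1 m2. (m1, p) \<in> ?Z' \<longrightarrow> (m2, p) \<in> ?Z' \<longrightarrow> m1 = m2"
    by auto
  ultimately show ?thesis by blast
qed

end
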